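(* Fix $\alpha\in(1,2)$ and $\beta\in[-1,1]$, and let $\phi\in C^2(\mathbb{R})$ with $\|\phi''\|_\infty<\infty$. Then for all $x,y\in\mathbb{R}$, \[ |(\mathcal{L}^{\alpha,\beta}\phi)(x)-(\mathcal{L}^{\alpha,\beta}\phi)(y)|\leqslant\frac{4d_\alpha\|\phi''\|_\infty}{\alpha(2-\alpha)(\alpha-1)}|x-y|^{2-\alpha}. \]
   Context: For $\phi\in C^2(\mathbb{R})$ with $\|\phi''\|_\infty<\infty$, \[ (\mathcal{L}^{\alpha,\beta}\phi)(x)=d_\alpha\int_{\mathbb{R}}\frac{\phi(u+x)-\phi(x)-u\phi'(x)}{2|u|^{1+\alpha}}\big[(1+\beta)\mathbf{1}_{(0,\infty)}(u)+(1-\beta)\mathbf{1}_{(-\infty,0)}(u)\big]du, \] where $d_\alpha=\big(\int_0^\infty\frac{1-\cos y}{y^{1+\alpha}}dy\big)^{-1}$. *)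

theory Defs
  imports "HOL-Analysis.Analysis"
begin

definition C2 :: "(real \<Rightarrow> real) \<Rightarrow> bool" where
  "C2 f \<longleftrightarrow> (\<forall>x. f differentiable (at x)) \<and> (\<forall>x. (deriv f) differentiable (at x))
            \<and> continuous_on UNIV (deriv (deriv f))"

definition sup_norm :: "(real \<Rightarrow> real) \<Rightarrow> real" where
  "sup_norm g = (SUP x. \<bar>g x\<bar>)"

definition d_const :: "real \<Rightarrow> real" where
  "d_const \<alpha> = inverse (LINT y:{0<..}|lborel. (1 - cos y) / y powr (1 + \<alpha>))"

definition stable_gen :: "real \<Rightarrow> real \<Rightarrow> (real \<Rightarrow> real) \<Rightarrow> real \<Rightarrow> real" where
  "stable_gen \<alpha> \<beta> \<phi> x = d_const \<alpha> *
     (LINT u|lborel. (\<phi> (u + x) - \<phi> x - u * deriv \<phi> x) / (2 * \<bar>u\<bar> powr (1 + \<alpha>))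
        * ((1 + \<beta>) * indicator {0<..} u + (1 - \<beta>) * indicator {..<0} u))"

end

theory Submission
  imports Defs
begin

text \<open>The integrand of \<open>\<L>\<^sup>\<alpha>\<^sup>,\<^sup>\<beta>\<phi>(x)\<close> is the first-order Taylor remainder of \<open>\<phi>\<close> at \<open>x\<close>
  against the kernel \<open>|u|\<^sup>-\<^sup>1\<^sup>-\<^sup>\<alpha>\<close>. As \<open>\<phi>'\<close> is \<open>\<parallel>\<phi>''\<parallel>\<close>-Lipschitz, the remainders at \<open>x\<close> and \<open>y\<close>
  differ by at most \<open>2\<parallel>\<phi>''\<parallel> min(u\<^sup>2, |x - y| |u|)\<close>: the quadratic bound is integrable
  against the kernel near \<open>0\<close> (as \<open>\<alpha> < 2\<close>), the linear one near infinity (as \<open>\<alpha> > 1\<close>), and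
  by scaling the integral of the minimum is \<open>|x - y|\<^sup>2\<^sup>-\<^sup>\<alpha> / ((2 - \<alpha>)(\<alpha> - 1))\<close>. The stated
  constant then follows from \<open>2 \<le> 4 / \<alpha>\<close>.\<close>

lemma has_integral_nonneg_imp_lborel:
  fixes f :: "real \<Rightarrow> real"
  assumes "f \<in> borel_measurable borel" and "\<And>x. 0 \<le> f x" and "(f has_integral I) UNIV"
  shows "integrable lborel f" and "integral\<^sup>L lborel f = I"
proof -
  have "0 \<le> I" using has_integral_nonneg[OF assms(3)] assms(2) by auto
  have nn: "integral\<^sup>N lborel f = I"
    by (rule nn_integral_has_integral_lborel[OF assms])
  show "integrable lborel f"
    by (rule integrableI_nonneg) (use assms nn in auto)
  show "integral\<^sup>L lborel f = I"
    using integral_eq_nn_integral[of f lborel] assms nn \<open>0 \<le> I\<close> by simp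
qed

lemma abs_integral_diff_le_integral:
  fixes f g e :: "'a \<Rightarrow> real"
  assumes [measurable]: "f \<in> borel_measurable M" "g \<in> borel_measurable M"
    and e: "integrable M e" and bound: "\<And>x. \<bar>f x - g x\<bar> \<le> e x"
  shows "\<bar>integral\<^sup>L M f - integral\<^sup>L M g\<bar> \<le> integral\<^sup>L M e"
proof -
  have "AE x in M. norm (f x - g x) \<le> norm (e x)"
    using bound by (auto intro: order_trans[OF _ abs_ge_self])
  then have fg: "integrable M (\<lambda>x. f x - g x)"
    by (rule Bochner_Integration.integrable_bound[OF e, rotated]) measurable
  have "integrable M f \<longleftrightarrow> integrable M g"
  proof
    assume "integrable M f"
    from Bochner_Integration.integrable_diff[OF this fg] show "integrable M g" by simp
  next
    assume "integrable M g"
    from Bochner_Integration.integrable_add[OF this fg] show "integrable M f" by simp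
  qed
  moreover have "0 \<le> integral\<^sup>L M e"
    by (rule Bochner_Integration.integral_nonneg) (use bound in \<open>auto intro: order_trans[OF abs_ge_zero]\<close>)
  moreover have "\<bar>integral\<^sup>L M (\<lambda>x. f x - g x)\<bar> \<le> integral\<^sup>L M e"
    using integral_abs_bound[of M "\<lambda>x. f x - g x"] integral_mono[OF integrable_abs[OF fg] e] bound
    by (meson order_trans)
  ultimately show ?thesis
    by (cases "integrable M f") (auto simp: not_integrable_integral_eq)
qed

lemma integral_truncated_powr_kernel:
  fixes h \<alpha> :: real
  assumes h: "0 < h" and "1 < \<alpha>" "\<alpha> < 2"
  defines "K \<equiv> \<lambda>u. indicator {0<..} u * (min (u\<^sup>2) (h * \<bar>u\<bar>) / \<bar>u\<bar> powr (1 + \<alpha>))"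
  shows "integrable lborel K" and "integral\<^sup>L lborel K = h powr (2 - \<alpha>) / ((2 - \<alpha>) * (\<alpha> - 1))"
proof -
  have near: "((\<lambda>u. u powr (1 - \<alpha>)) has_integral h powr (2 - \<alpha>) / (2 - \<alpha>)) {0..h}"
    using has_integral_powr_from_0[of "1 - \<alpha>" h] assms by (simp add: algebra_simps)
  have "h * (- (h powr (1 - \<alpha>)) / (1 - \<alpha>)) = h powr (2 - \<alpha>) / (\<alpha> - 1)"
    using h \<open>1 < \<alpha>\<close> by (simp add: field_simps powr_mult_base)
  then have far: "((\<lambda>u. h * u powr (- \<alpha>)) has_integral h powr (2 - \<alpha>) / (\<alpha> - 1)) {h..}"
    using has_integral_mult_right[OF has_integral_powr_to_inf[of "- \<alpha>" h], of h] assms by simp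
  define Q where "Q u = (if u \<in> {0..h} then u powr (1 - \<alpha>) else 0)
      + (if u \<in> {h..} then h * u powr (- \<alpha>) else 0)" for u
  have "(Q has_integral h powr (2 - \<alpha>) / (2 - \<alpha>) + h powr (2 - \<alpha>) / (\<alpha> - 1)) UNIV"
    unfolding Q_def by (intro has_integral_add; subst has_integral_restrict_UNIV) (fact near, fact far)
  moreover have "h powr (2 - \<alpha>) / (2 - \<alpha>) + h powr (2 - \<alpha>) / (\<alpha> - 1)
      = h powr (2 - \<alpha>) / ((2 - \<alpha>) * (\<alpha> - 1))"
    using assms by (simp add: field_simps)
  moreover have "K u = Q u" if "u \<notin> {0, h}" for u
  proof (cases "0 < u")
    case True
    then have "u\<^sup>2 / u powr (1 + \<alpha>) = u powr (1 - \<alpha>)" and "h * u / u powr (1 + \<alpha>) = h * u powr (- \<alpha>)"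
      by (simp_all add: powr_add powr_minus powr_diff field_simps power2_eq_square)
    moreover have "min (u\<^sup>2) (h * u) = (if u < h then u\<^sup>2 else h * u)"
      using True by (simp add: power2_eq_square)
    ultimately show ?thesis
      using True that unfolding K_def Q_def by auto
  qed (use that h in \<open>auto simp: K_def Q_def\<close>)
  ultimately have "(K has_integral h powr (2 - \<alpha>) / ((2 - \<alpha>) * (\<alpha> - 1))) UNIV"
    using has_integral_spike_finite[of "{0, h}" UNIV K Q] by auto
  moreover have "K \<in> borel_measurable borel"
    unfolding K_def by measurable
  moreover have "0 \<le> K u" for u
    unfolding K_def using h by (auto simp: indicator_def)
  ultimately show "integrable lborel K" and "integral\<^sup>L lborel K = h powr (2 - \<alpha>) / ((2 - \<alpha>) * (\<alpha> - 1))"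
    using has_integral_nonneg_imp_lborel by blast+
qed

definition stable_kernel :: "real \<Rightarrow> real \<Rightarrow> real \<Rightarrow> real" where
  "stable_kernel \<alpha> \<beta> u =
     ((1 + \<beta>) * indicator {0<..} u + (1 - \<beta>) * indicator {..<0} u) / (2 * \<bar>u\<bar> powr (1 + \<alpha>))"

lemma stable_kernel_measurable [measurable]: "stable_kernel \<alpha> \<beta> \<in> borel_measurable borel"
  unfolding stable_kernel_def by measurable

lemma stable_kernel_nonneg: "-1 \<le> \<beta> \<Longrightarrow> \<beta> \<le> 1 \<Longrightarrow> 0 \<le> stable_kernel \<alpha> \<beta> u"
  by (auto simp: stable_kernel_def indicator_def)

lemma stable_gen_eq_integral_stable_kernel:
  "stable_gen \<alpha> \<beta> \<phi> x
     = d_const \<alpha> * (\<integral>u. (\<phi> (u + x) - \<phi> x - u * deriv \<phi> x) * stable_kernel \<alpha> \<beta> u \<partial>lborel)"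
  by (simp add: stable_gen_def stable_kernel_def)

lemma integral_truncated_stable_kernel:
  fixes h \<alpha> \<beta> :: real
  assumes "0 < h" and "1 < \<alpha>" "\<alpha> < 2"
  defines "T \<equiv> \<lambda>u. min (u\<^sup>2) (h * \<bar>u\<bar>) * stable_kernel \<alpha> \<beta> u"
  shows "integrable lborel T" and "integral\<^sup>L lborel T = h powr (2 - \<alpha>) / ((2 - \<alpha>) * (\<alpha> - 1))"
proof -
  define K where "K u = indicator {0<..} u * (min (u\<^sup>2) (h * \<bar>u\<bar>) / \<bar>u\<bar> powr (1 + \<alpha>))" for u
  note K = integral_truncated_powr_kernel[OF assms(1-3), folded K_def]
  have K_reflected: "integrable lborel (\<lambda>u. K (- u))" "integral\<^sup>L lborel (\<lambda>u. K (- u)) = integral\<^sup>L lborel K"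
    using lborel_integrable_real_affine[OF K(1), of "-1" 0] lborel_integral_real_affine[of "-1" K 0] by simp_all
  have T_split: "T = (\<lambda>u. (1 + \<beta>) / 2 * K u + (1 - \<beta>) / 2 * K (- u))"
    by (auto simp: fun_eq_iff T_def K_def stable_kernel_def indicator_def)
  show "integrable lborel T"
    unfolding T_split using K(1) K_reflected by simp
  have "integral\<^sup>L lborel T = (1 + \<beta>) / 2 * integral\<^sup>L lborel K + (1 - \<beta>) / 2 * integral\<^sup>L lborel K"
    unfolding T_split using K(1) K_reflected by simp
  also have "\<dots> = integral\<^sup>L lborel K"
    by (simp add: field_simps)
  finally show "integral\<^sup>L lborel T = h powr (2 - \<alpha>) / ((2 - \<alpha>) * (\<alpha> - 1))"
    using K(2) by simp
qed

lemma first_order_remainder_le: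
  fixes f f' :: "real \<Rightarrow> real"
  assumes f': "\<And>t. (f has_real_derivative f' t) (at t)"
    and lip: "\<And>a b. \<bar>f' a - f' b\<bar> \<le> M * \<bar>a - b\<bar>"
  shows "\<bar>f (u + x) - f x - u * f' x\<bar> \<le> M * u\<^sup>2"
proof -
  define S where "S = {min 0 u .. max 0 u}"
  have "norm ((f (u + x) - u * f' x) - (f (0 + x) - 0 * f' x)) \<le> M * \<bar>u\<bar> * norm (u - 0)"
  proof (rule field_differentiable_bound[of S _ "\<lambda>t. f' (t + x) - f' x"])
    show "((\<lambda>t. f (t + x) - t * f' x) has_field_derivative f' (t + x) - f' x) (at t within S)" for t
      by (rule has_field_derivative_at_within) (auto intro!: derivative_eq_intros DERIV_chain2[OF f'])
    show "norm (f' (t + x) - f' x) \<le> M * \<bar>u\<bar>" if "t \<in> S" for t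
    proof -
      have "0 \<le> M" using lip[of 1 0] by simp
      moreover have "\<bar>t\<bar> \<le> \<bar>u\<bar>" using that unfolding S_def by auto
      ultimately show ?thesis
        using lip[of "t + x" x] by (simp add: order_trans[OF _ mult_left_mono])
    qed
  qed (auto simp: S_def)
  then show ?thesis
    by (simp add: power2_eq_square abs_mult_self_eq mult.assoc)
qed

lemma first_order_remainder_diff_le:
  fixes f f' :: "real \<Rightarrow> real"
  assumes f': "\<And>t. (f has_real_derivative f' t) (at t)"
    and lip: "\<And>a b. \<bar>f' a - f' b\<bar> \<le> M * \<bar>a - b\<bar>"
  shows "\<bar>(f (u + x) - f x - u * f' x) - (f (u + y) - f y - u * f' y)\<bar> \<le> 2 * M * \<bar>x - y\<bar> * \<bar>u\<bar>"
proof -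
  define H where "H t = f (t + x) - f (t + y) - t * (f' x - f' y)" for t
  have "norm (H u - H 0) \<le> 2 * M * \<bar>x - y\<bar> * norm (u - 0)"
  proof (rule field_differentiable_bound[of UNIV H "\<lambda>t. f' (t + x) - f' (t + y) - (f' x - f' y)"])
    show "(H has_field_derivative f' (t + x) - f' (t + y) - (f' x - f' y)) (at t within UNIV)" for t
      unfolding H_def by (auto intro!: derivative_eq_intros DERIV_chain2[OF f'])
    show "norm (f' (t + x) - f' (t + y) - (f' x - f' y)) \<le> 2 * M * \<bar>x - y\<bar>" for t
      using lip[of "t + x" "t + y"] lip[of x y] by simp
  qed auto
  then show ?thesis
    unfolding H_def by (simp add: algebra_simps)
qed

lemma first_order_remainder_diff_le_min:
  fixes f f' :: "real \<Rightarrow> real"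
  assumes "\<And>t. (f has_real_derivative f' t) (at t)"
    and "\<And>a b. \<bar>f' a - f' b\<bar> \<le> M * \<bar>a - b\<bar>"
  shows "\<bar>(f (u + x) - f x - u * f' x) - (f (u + y) - f y - u * f' y)\<bar>
           \<le> 2 * M * min (u\<^sup>2) (\<bar>x - y\<bar> * \<bar>u\<bar>)"
  using first_order_remainder_le[OF assms, of u x] first_order_remainder_le[OF assms, of u y]
    first_order_remainder_diff_le[OF assms, of u x y]
  by (auto simp: min_def)

lemma C2_has_real_derivative: "C2 \<phi> \<Longrightarrow> (\<phi> has_real_derivative deriv \<phi> t) (at t)"
  by (simp add: C2_def DERIV_deriv_iff_real_differentiable)

lemma C2_deriv_lipschitz:
  assumes "C2 \<phi>" and "\<And>t. \<bar>deriv (deriv \<phi>) t\<bar> \<le> M"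
  shows "\<bar>deriv \<phi> a - deriv \<phi> b\<bar> \<le> M * \<bar>a - b\<bar>"
proof -
  have "(deriv \<phi> has_real_derivative deriv (deriv \<phi>) t) (at t within UNIV)" for t
    using assms(1) by (simp add: C2_def DERIV_deriv_iff_real_differentiable)
  then show ?thesis
    using field_differentiable_bound[of UNIV "deriv \<phi>" "deriv (deriv \<phi>)" M a b] assms(2) by auto
qed

lemma C2_borel_measurable: "C2 \<phi> \<Longrightarrow> \<phi> \<in> borel_measurable borel"
  unfolding C2_def
  by (intro borel_measurable_continuous_onI differentiable_imp_continuous_on)
     (auto simp: differentiable_on_def)

lemma abs_le_sup_norm: "bdd_above (range (\<lambda>x. \<bar>g x\<bar>)) \<Longrightarrow> \<bar>g x\<bar> \<le> sup_norm g"
  unfolding sup_norm_def by (rule cSUP_upper) auto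

lemma d_const_nonneg: "0 \<le> d_const \<alpha>"
  unfolding d_const_def set_lebesgue_integral_def
  by (intro inverse_nonnegative_iff_nonnegative[THEN iffD2] Bochner_Integration.integral_nonneg)
     (auto simp: indicator_def)

lemma stable_remainder_integral_holder:
  fixes f f' :: "real \<Rightarrow> real" and \<alpha> \<beta> :: real
  assumes [measurable]: "f \<in> borel_measurable borel"
    and f': "\<And>t. (f has_real_derivative f' t) (at t)"
    and lip: "\<And>a b. \<bar>f' a - f' b\<bar> \<le> M * \<bar>a - b\<bar>"
    and "1 < \<alpha>" "\<alpha> < 2" "-1 \<le> \<beta>" "\<beta> \<le> 1"
  defines "R \<equiv> \<lambda>z u. (f (u + z) - f z - u * f' z) * stable_kernel \<alpha> \<beta> u"
  shows "\<bar>integral\<^sup>L lborel (R x) - integral\<^sup>L lborel (R y)\<bar>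
           \<le> 2 * M / ((2 - \<alpha>) * (\<alpha> - 1)) * \<bar>x - y\<bar> powr (2 - \<alpha>)"
proof (cases "x = y")
  case True
  have "0 \<le> M" using lip[of 1 0] by simp
  with True show ?thesis using assms(4,5) by simp
next
  case False
  define T where "T u = min (u\<^sup>2) (\<bar>x - y\<bar> * \<bar>u\<bar>) * stable_kernel \<alpha> \<beta> u" for u
  note T = integral_truncated_stable_kernel[of "\<bar>x - y\<bar>" \<alpha> \<beta>, folded T_def]
  have "\<bar>R x u - R y u\<bar> \<le> 2 * M * T u" for u
  proof -
    have "\<bar>R x u - R y u\<bar>
        = \<bar>(f (u + x) - f x - u * f' x) - (f (u + y) - f y - u * f' y)\<bar> * stable_kernel \<alpha> \<beta> u"
      unfolding R_def using stable_kernel_nonneg[OF assms(6,7)]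
      by (simp flip: left_diff_distrib add: abs_mult)
    also have "\<dots> \<le> 2 * M * T u"
      unfolding T_def mult.assoc[symmetric]
      by (intro mult_right_mono first_order_remainder_diff_le_min[OF f' lip] stable_kernel_nonneg assms(6,7))
    finally show ?thesis .
  qed
  then have "\<bar>integral\<^sup>L lborel (R x) - integral\<^sup>L lborel (R y)\<bar> \<le> integral\<^sup>L lborel (\<lambda>u. 2 * M * T u)"
    by (intro abs_integral_diff_le_integral) (use False assms T in \<open>simp_all add: R_def\<close>)
  also have "\<dots> = 2 * M / ((2 - \<alpha>) * (\<alpha> - 1)) * \<bar>x - y\<bar> powr (2 - \<alpha>)"
    using False assms T by simp
  finally show ?thesis .
qed

theorem proposition2p2:
  fixes \<alpha> \<beta> :: real and \<phi> :: "real \<Rightarrow> real"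
  assumes "1 < \<alpha>" "\<alpha> < 2" "-1 \<le> \<beta>" "\<beta> \<le> 1"
    and "C2 \<phi>"
    and "bdd_above (range (\<lambda>x. \<bar>deriv (deriv \<phi>) x\<bar>))"
  shows "\<forall>x y::real. \<bar>stable_gen \<alpha> \<beta> \<phi> x - stable_gen \<alpha> \<beta> \<phi> y\<bar>
           \<le> 4 * d_const \<alpha> * sup_norm (deriv (deriv \<phi>)) / (\<alpha> * (2 - \<alpha>) * (\<alpha> - 1))
              * \<bar>x - y\<bar> powr (2 - \<alpha>)"
proof (intro allI)
  fix x y :: real
  define M where "M = sup_norm (deriv (deriv \<phi>))"
  define P where "P = d_const \<alpha> * M / ((2 - \<alpha>) * (\<alpha> - 1)) * \<bar>x - y\<bar> powr (2 - \<alpha>)"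
  have lip: "\<bar>deriv \<phi> a - deriv \<phi> b\<bar> \<le> M * \<bar>a - b\<bar>" for a b
    using C2_deriv_lipschitz[OF assms(5) abs_le_sup_norm[OF assms(6)]] by (simp add: M_def)
  have "0 \<le> M" using lip[of 1 0] by simp
  then have "0 \<le> P" unfolding P_def using d_const_nonneg assms(1,2) by simp
  have "\<bar>stable_gen \<alpha> \<beta> \<phi> x - stable_gen \<alpha> \<beta> \<phi> y\<bar>
      \<le> d_const \<alpha> * (2 * M / ((2 - \<alpha>) * (\<alpha> - 1)) * \<bar>x - y\<bar> powr (2 - \<alpha>))"
    unfolding stable_gen_eq_integral_stable_kernel right_diff_distrib[symmetric] abs_mult
      abs_of_nonneg[OF d_const_nonneg]
    by (intro mult_left_mono d_const_nonneg stable_remainder_integral_holder[OF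
          C2_borel_measurable[OF assms(5)] C2_has_real_derivative[OF assms(5)] lip assms(1-4)])
  also have "\<dots> = 2 * P" unfolding P_def by simp
  also have "\<dots> \<le> 4 / \<alpha> * P"
    using \<open>0 \<le> P\<close> assms(1,2) by (intro mult_right_mono) (simp_all add: field_simps)
  also have "\<dots> = 4 * d_const \<alpha> * M / (\<alpha> * (2 - \<alpha>) * (\<alpha> - 1)) * \<bar>x - y\<bar> powr (2 - \<alpha>)"
    unfolding P_def by (simp add: field_simps)
  finally show "\<bar>stable_gen \<alpha> \<beta> \<phi> x - stable_gen \<alpha> \<beta> \<phi> y\<bar>
      \<le> 4 * d_const \<alpha> * sup_norm (deriv (deriv \<phi>)) / (\<alpha> * (2 - \<alpha>) * (\<alpha> - 1))
         * \<bar>x - y\<bar> powr (2 - \<alpha>)"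
    unfolding M_def .
qed

end
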